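(* In the space $\widetilde{l_1}$, the sequence $\{2^{-i}e_{2^i}\}_{i=0}^\infty$ is equivalent to the canonical basis of $l_1$; that is, there are constants $0<c\le C$ such that $c\sum_{i=0}^n|c_i|\le\big\|\sum_{i=0}^nc_i2^{-i}e_{2^i}\big\|_{\widetilde{l_1}}\le C\sum_{i=0}^n|c_i|$ for all $n$ and all scalars $c_0,\dots,c_n$.
   Context: $e_m$ denotes the $m$-th unit vector sequence. For a real sequence $a=(a_n)_{n\ge1}$ let $\widetilde{a_n}=\sup_{k\ge n}|a_k|$; $\widetilde{l_1}$ is the space of sequences with $\|a\|_{\widetilde{l_1}}=\sum_{n\ge1}\widetilde{a_n}<\infty$. *)

theory Defs
  imports "HOL-Analysis.Analysis"
begin

text \<open>Real sequences are functions nat \<Rightarrow> real; only indices n \<ge> 1 are used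
  (index 0 is ignored by all definitions below).\<close>

definition unit_seq :: "nat \<Rightarrow> nat \<Rightarrow> real" where
  "unit_seq m = (\<lambda>k. if k = m then 1 else 0)"

definition tilde :: "(nat \<Rightarrow> real) \<Rightarrow> nat \<Rightarrow> real" where
  "tilde a n = (SUP k\<in>{n..}. \<bar>a k\<bar>)"

definition ltilde_norm :: "(nat \<Rightarrow> real) \<Rightarrow> real" where
  "ltilde_norm a = (\<Sum>n. tilde a (Suc n))"

end

theory Submission
  imports Defs
begin

text \<open>The only nonzero entries of a = \<Sum> c_i 2^-i e_(2^i) are c_i/2^i at k = 2^i, so tilde a m
  is at most the sum of the |c_i|/2^i with m \<le> 2^i. Summing over m = 1..2^n, each |c_i|/2^i is
  counted 2^i times: this is the upper bound with C = 1. Conversely tilde a m \<ge> |c_j|/2^j on the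
  dyadic block 2^(j-1) < m \<le> 2^j of length 2^(j-1), so each block contributes at least |c_j|/2:
  this is the lower bound with c = 1/2.\<close>

lemma abs_le_tilde:
  assumes "bdd_above (range (\<lambda>k. \<bar>a k\<bar>))" and "m \<le> k"
  shows "\<bar>a k\<bar> \<le> tilde a m"
  unfolding tilde_def
  by (rule cSUP_upper2[where x = k]) (use assms in \<open>auto intro: bdd_above_mono\<close>)

lemma tilde_nonneg:
  assumes "bdd_above (range (\<lambda>k. \<bar>a k\<bar>))"
  shows "0 \<le> tilde a m"
  using abs_le_tilde[OF assms order_refl] by (rule order_trans[rotated]) simp

lemma tilde_le:
  assumes "\<And>k. m \<le> k \<Longrightarrow> \<bar>a k\<bar> \<le> B"
  shows "tilde a m \<le> B"
  unfolding tilde_def by (rule cSUP_least) (use assms in auto)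

lemma ltilde_norm_finite_support:
  assumes "bdd_above (range (\<lambda>k. \<bar>a k\<bar>))" and "\<And>k. N < k \<Longrightarrow> a k = 0"
  shows "ltilde_norm a = (\<Sum>m<N. tilde a (Suc m))"
proof -
  have "tilde a (Suc m) = 0" if "N \<le> m" for m
  proof (rule order.antisym)
    show "tilde a (Suc m) \<le> 0"
      by (rule tilde_le) (use assms(2) that in auto)
  qed (rule tilde_nonneg[OF assms(1)])
  then show ?thesis
    unfolding ltilde_norm_def by (intro suminf_finite) auto
qed

lemma sum_over_dyadic_blocks_ge:
  fixes f d :: "nat \<Rightarrow> real"
  assumes "\<And>j. 0 \<le> d j"
    and "\<And>j m. j \<le> n \<Longrightarrow> m < 2 ^ j \<Longrightarrow> d j / 2 ^ j \<le> f m"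
  shows "(\<Sum>j\<le>n. d j) / 2 \<le> (\<Sum>m<2 ^ n. f m)"
  using assms(2)
proof (induction n)
  case 0
  then show ?case using assms(1)[of 0] by force
next
  case (Suc n)
  have "(\<Sum>m<2 ^ Suc n. f m) = (\<Sum>m<2 ^ n. f m) + (\<Sum>m\<in>{2 ^ n..<2 ^ Suc n}. f m)"
    by (simp add: lessThan_atLeast0 sum.atLeastLessThan_concat)
  moreover have "d (Suc n) / 2 \<le> (\<Sum>m\<in>{2 ^ n..<2 ^ Suc n}. f m)"
  proof -
    have "real (card {2 ^ n..<(2::nat) ^ Suc n}) * (d (Suc n) / 2 ^ Suc n)
        \<le> (\<Sum>m\<in>{2 ^ n..<2 ^ Suc n}. f m)"
      by (rule sum_bounded_below) (use Suc.prems[of "Suc n"] in auto)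
    then show ?thesis by simp
  qed
  ultimately show ?case using Suc by fastforce
qed

lemma sum_dyadic_truncations:
  fixes b :: "nat \<Rightarrow> real"
  shows "(\<Sum>m<2 ^ n. \<Sum>i\<le>n. if m < (2::nat) ^ i then b i / 2 ^ i else 0) = (\<Sum>i\<le>n. b i)"
proof -
  have "(\<Sum>m<(2::nat) ^ n. if m < 2 ^ i then b i / 2 ^ i else 0) = b i" if "i \<le> n" for i
  proof -
    have "{..<(2::nat) ^ n} \<inter> {m. m < 2 ^ i} = {..<2 ^ i}"
      using power_increasing[OF that, of "2::nat"] by (auto intro: less_le_trans)
    then show ?thesis by (simp add: sum.If_cases)
  qed
  then show ?thesis by (subst sum.swap) (rule sum.cong; simp)
qed

definition dyadic_comb :: "nat \<Rightarrow> (nat \<Rightarrow> real) \<Rightarrow> nat \<Rightarrow> real" where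
  "dyadic_comb n cs k = (\<Sum>i\<le>n. cs i * 2 powi (- int i) * unit_seq (2 ^ i) k)"

lemma dyadic_comb_eq:
  "dyadic_comb n cs k = (\<Sum>i\<le>n. if k = 2 ^ i then cs i / 2 ^ i else 0)"
  unfolding dyadic_comb_def unit_seq_def
  by (intro sum.cong) (simp_all add: power_int_minus field_simps)

lemma abs_dyadic_comb_le:
  "\<bar>dyadic_comb n cs k\<bar> \<le> (\<Sum>i\<le>n. if k = 2 ^ i then \<bar>cs i\<bar> / 2 ^ i else 0)"
  unfolding dyadic_comb_eq by (rule order_trans[OF sum_abs]) (simp add: sum_mono)

lemma dyadic_comb_pow2:
  "j \<le> n \<Longrightarrow> dyadic_comb n cs (2 ^ j) = cs j / 2 ^ j"
  unfolding dyadic_comb_eq by (simp cong: if_cong)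

lemma dyadic_comb_bounded: "bdd_above (range (\<lambda>k. \<bar>dyadic_comb n cs k\<bar>))"
proof (rule bdd_aboveI2)
  show "\<bar>dyadic_comb n cs k\<bar> \<le> (\<Sum>i\<le>n. \<bar>cs i\<bar> / 2 ^ i)" for k
    by (rule order_trans[OF abs_dyadic_comb_le]) (simp add: sum_mono)
qed

lemma tilde_dyadic_comb_le:
  "tilde (dyadic_comb n cs) m \<le> (\<Sum>i\<le>n. if m \<le> 2 ^ i then \<bar>cs i\<bar> / 2 ^ i else 0)"
  by (rule tilde_le, rule order_trans[OF abs_dyadic_comb_le]) (auto intro: sum_mono)

lemma tilde_dyadic_comb_ge:
  "j \<le> n \<Longrightarrow> m \<le> 2 ^ j \<Longrightarrow> \<bar>cs j\<bar> / 2 ^ j \<le> tilde (dyadic_comb n cs) m"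
  using abs_le_tilde[OF dyadic_comb_bounded, of m "2 ^ j" n cs] by (simp add: dyadic_comb_pow2)

lemma ltilde_norm_dyadic_comb:
  "ltilde_norm (dyadic_comb n cs) = (\<Sum>m<2 ^ n. tilde (dyadic_comb n cs) (Suc m))"
proof (rule ltilde_norm_finite_support[OF dyadic_comb_bounded])
  fix k :: nat assume "2 ^ n < k"
  then have "k \<noteq> 2 ^ i" if "i \<le> n" for i
    using power_increasing[OF that, of "2::nat"] by auto
  then show "dyadic_comb n cs k = 0" unfolding dyadic_comb_eq by simp
qed

lemma ltilde_norm_dyadic_comb_ge:
  "(\<Sum>i\<le>n. \<bar>cs i\<bar>) / 2 \<le> ltilde_norm (dyadic_comb n cs)"
  unfolding ltilde_norm_dyadic_comb
  by (rule sum_over_dyadic_blocks_ge) (auto intro: tilde_dyadic_comb_ge)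

lemma ltilde_norm_dyadic_comb_le:
  "ltilde_norm (dyadic_comb n cs) \<le> (\<Sum>i\<le>n. \<bar>cs i\<bar>)"
proof -
  have "ltilde_norm (dyadic_comb n cs) = (\<Sum>m<2 ^ n. tilde (dyadic_comb n cs) (Suc m))"
    by (rule ltilde_norm_dyadic_comb)
  also have "\<dots> \<le> (\<Sum>m<2 ^ n. \<Sum>i\<le>n. if m < (2::nat) ^ i then \<bar>cs i\<bar> / 2 ^ i else 0)"
  proof (rule sum_mono)
    fix m
    show "tilde (dyadic_comb n cs) (Suc m)
        \<le> (\<Sum>i\<le>n. if m < (2::nat) ^ i then \<bar>cs i\<bar> / 2 ^ i else 0)"
      using tilde_dyadic_comb_le[of n cs "Suc m"] by (simp only: Suc_le_eq)
  qed
  also have "\<dots> = (\<Sum>i\<le>n. \<bar>cs i\<bar>)"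
    by (rule sum_dyadic_truncations)
  finally show ?thesis .
qed

theorem theorem2:
  shows "\<exists>c C :: real. 0 < c \<and> c \<le> C \<and>
    (\<forall>(n::nat) (cs::nat \<Rightarrow> real).
       c * (\<Sum>i\<le>n. \<bar>cs i\<bar>)
         \<le> ltilde_norm (\<lambda>k. \<Sum>i\<le>n. cs i * (2::real) powi (- int i) * unit_seq (2 ^ i) k) \<and>
       ltilde_norm (\<lambda>k. \<Sum>i\<le>n. cs i * (2::real) powi (- int i) * unit_seq (2 ^ i) k)
         \<le> C * (\<Sum>i\<le>n. \<bar>cs i\<bar>))"
proof -
  have comb: "(\<lambda>k. \<Sum>i\<le>n. cs i * (2::real) powi (- int i) * unit_seq (2 ^ i) k) = dyadic_comb n cs"
    for n cs by (simp add: dyadic_comb_def fun_eq_iff)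
  show ?thesis
    by (rule exI[of _ "1/2"], rule exI[of _ 1])
      (use ltilde_norm_dyadic_comb_ge in \<open>auto simp: comb ltilde_norm_dyadic_comb_le\<close>)
qed

end
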